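(* Let $T$ be a directed tree with root (source) $\rho$, let $R$ be a finite set of positive integers such that there exists a burning assignment $\phi:R\to V(T)$ with $V(T)=\bigcup_{r\in R}N^+_{r-1}(\phi(r))$, and let $s$ be a sink of $T$ whose distance $d(\rho,s)$ from $\rho$ is maximal among all sinks. Then either $d(\rho,s)\le \max(R)-1$, or there exist a burning assignment $\phi:R\to V(T)$ with $V(T)=\bigcup_{r\in R}N^+_{r-1}(\phi(r))$ and some $r\in R$ such that $\phi(r)$ is the node $v$ on the path from $\rho$ to $s$ with $d(v,s)=r-1$.
   Context: A directed tree is a rooted tree with a single source (the root) whose arcs are all directed away from the root. $d(u,w)$ denotes the directed distance (number of arcs of a shortest directed path) from $u$ to $w$. $N^+_k(v)$ is the set of nodes reachable from $v$ by a directed path with at most $k$ arcs (so $N^+_0(v)=\{v\}$). For a set $R$ of positive integers (burning ranges), a burning assignment is a map $\phi:R\to V(T)$; it burns $T$ if $V(T)=\bigcup_{r\in R}N^+_{r-1}(\phi(r))$. *)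

theory Defs
  imports Main
begin

definition directed_tree :: "'a set \<Rightarrow> ('a \<times> 'a) set \<Rightarrow> 'a \<Rightarrow> bool" where
  "directed_tree V E rho \<longleftrightarrow>
     finite V \<and> rho \<in> V \<and> E \<subseteq> V \<times> V \<and>
     (\<forall>v\<in>V. (rho, v) \<in> E\<^sup>*) \<and>
     (\<forall>u. (u, rho) \<notin> E) \<and>
     (\<forall>v\<in>V - {rho}. \<exists>!u. (u, v) \<in> E)"

definition ddist :: "('a \<times> 'a) set \<Rightarrow> 'a \<Rightarrow> 'a \<Rightarrow> nat" where
  "ddist E u w = (LEAST k. (u, w) \<in> E ^^ k)"

definition out_nbhd :: "('a \<times> 'a) set \<Rightarrow> nat \<Rightarrow> 'a \<Rightarrow> 'a set" where
  "out_nbhd E k v = {w. \<exists>j\<le>k. (v, w) \<in> E ^^ j}"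

definition burns :: "'a set \<Rightarrow> ('a \<times> 'a) set \<Rightarrow> nat set \<Rightarrow> (nat \<Rightarrow> 'a) \<Rightarrow> bool" where
  "burns V E R phi \<longleftrightarrow> (\<forall>r\<in>R. phi r \<in> V) \<and> V = (\<Union>r\<in>R. out_nbhd E (r - 1) (phi r))"

definition is_sink :: "'a set \<Rightarrow> ('a \<times> 'a) set \<Rightarrow> 'a \<Rightarrow> bool" where
  "is_sink V E s \<longleftrightarrow> s \<in> V \<and> (\<forall>w. (s, w) \<notin> E)"

end

theory Submission
  imports Defs
begin

text \<open>Let \<open>s\<close> be burnt by the source \<open>u = \<phi>(r)\<close> at distance \<open>j \<le> r - 1\<close>, and let \<open>v\<close> be the
  ancestor of \<open>s\<close> at distance \<open>r - 1\<close> (it exists once \<open>d(\<rho>, s) \<ge> max R \<ge> r\<close>), so that \<open>v\<close> lies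
  above \<open>u\<close>. Since \<open>s\<close> is a deepest vertex of the whole tree, no descendant of \<open>u\<close> is more than
  \<open>j\<close> arcs below \<open>u\<close>, hence every vertex burnt by \<open>u\<close> is within \<open>r - 1 - j + j = r - 1\<close> arcs of
  \<open>v\<close>. Moving the source of range \<open>r\<close> from \<open>u\<close> to \<open>v\<close> therefore still burns the tree.\<close>

lemma relpow_split:
  assumes "(x, y) \<in> E ^^ n" "k \<le> n"
  obtains z where "(x, z) \<in> E ^^ (n - k)" "(z, y) \<in> E ^^ k"
proof -
  have "(x, y) \<in> E ^^ ((n - k) + k)" using assms by simp
  then show ?thesis using that unfolding relpow_add by blast
qed

lemma out_nbhd_of_descendant:
  assumes "(v, u) \<in> E ^^ m"
  shows "out_nbhd E k u \<subseteq> out_nbhd E (m + k) v"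
proof
  fix w assume "w \<in> out_nbhd E k u"
  then obtain j where j: "j \<le> k" "(u, w) \<in> E ^^ j" unfolding out_nbhd_def by blast
  then have "(v, w) \<in> E ^^ (m + j)" using assms relpow_add by blast
  moreover have "m + j \<le> m + k" using j(1) by simp
  ultimately show "w \<in> out_nbhd E (m + k) v" unfolding out_nbhd_def by blast
qed

lemma burns_fun_upd:
  assumes "burns V E R phi" "r \<in> R" "v \<in> V"
    and "out_nbhd E (r - 1) (phi r) \<subseteq> out_nbhd E (r - 1) v" "out_nbhd E (r - 1) v \<subseteq> V"
  shows "burns V E R (phi(r := v))"
proof -
  let ?phi' = "phi(r := v)"
  have in_V: "\<forall>r\<in>R. phi r \<in> V" and cover: "V = (\<Union>r\<in>R. out_nbhd E (r - 1) (phi r))"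
    using assms(1) unfolding burns_def by blast+
  have "out_nbhd E (r' - 1) (phi r') \<subseteq> out_nbhd E (r' - 1) (?phi' r')" for r'
    using assms(4) by (cases "r' = r") auto
  then have "V \<subseteq> (\<Union>r'\<in>R. out_nbhd E (r' - 1) (?phi' r'))"
    using cover by blast
  moreover have "out_nbhd E (r' - 1) (?phi' r') \<subseteq> V" if "r' \<in> R" for r'
    using assms(5) cover that by (cases "r' = r") auto
  moreover have "\<forall>r'\<in>R. ?phi' r' \<in> V" using in_V assms(3) by simp
  ultimately show ?thesis unfolding burns_def by blast
qed

locale arborescence =
  fixes V :: "'a set" and E :: "('a \<times> 'a) set" and rho :: 'a
  assumes directed_tree: "directed_tree V E rho"
begin

lemma finite_vertices: "finite V"
  and root_in_V: "rho \<in> V"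
  and arcs_subset: "E \<subseteq> V \<times> V"
  and reachable_from_root: "v \<in> V \<Longrightarrow> (rho, v) \<in> E\<^sup>*"
  and no_arc_into_root: "(u, rho) \<notin> E"
  using directed_tree unfolding directed_tree_def by auto

lemma in_arc_unique:
  assumes "(u, v) \<in> E" "(u', v) \<in> E"
  shows "u = u'"
proof -
  have "v \<in> V - {rho}" using assms arcs_subset no_arc_into_root by auto
  then show ?thesis using assms directed_tree unfolding directed_tree_def by blast
qed

lemma reachable_in_V:
  assumes "(x, y) \<in> E\<^sup>*" "x \<in> V"
  shows "y \<in> V"
  using assms by induction (use arcs_subset in auto)

lemma out_nbhd_subset_V: "x \<in> V \<Longrightarrow> out_nbhd E k x \<subseteq> V"
  unfolding out_nbhd_def using reachable_in_V relpow_imp_rtrancl by blast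

lemma ancestor_at_distance_unique:
  "(x, y) \<in> E ^^ k \<Longrightarrow> (x', y) \<in> E ^^ k \<Longrightarrow> x = x'"
proof (induction k arbitrary: y)
  case (Suc k)
  then obtain z z' where z: "(x, z) \<in> E ^^ k" "(z, y) \<in> E"
    and z': "(x', z') \<in> E ^^ k" "(z', y) \<in> E"
    by auto
  have "z = z'" using in_arc_unique[OF z(2) z'(2)] .
  then show ?case using Suc.IH z(1) z'(1) by simp
qed simp

lemma root_path_not_longer:
  assumes "(rho, y) \<in> E ^^ n" "(rho, y) \<in> E ^^ m"
  shows "\<not> n < m"
proof
  assume "n < m"
  then obtain d where "m = Suc d + n" using less_iff_Suc_add by auto
  then have "(rho, y) \<in> E ^^ Suc d O E ^^ n" using assms(2) by (simp only: relpow_add)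
  then obtain z where z: "(rho, z) \<in> E ^^ Suc d" "(z, y) \<in> E ^^ n" by blast
  obtain w where "(w, z) \<in> E" using z(1) by (rule relpow_Suc_E)
  moreover have "z = rho" using ancestor_at_distance_unique[OF z(2) assms(1)] .
  ultimately show False using no_arc_into_root by simp
qed

lemma root_path_length_unique:
  "(rho, y) \<in> E ^^ n \<Longrightarrow> (rho, y) \<in> E ^^ m \<Longrightarrow> n = m"
  using root_path_not_longer[of y n m] root_path_not_longer[of y m n] by linarith

lemma ddist_eq_relpow:
  assumes "x \<in> V" "(x, y) \<in> E ^^ k"
  shows "ddist E x y = k"
proof -
  obtain a where a: "(rho, x) \<in> E ^^ a"
    using reachable_from_root[OF assms(1)] rtrancl_power by blast
  have "m = k" if "(x, y) \<in> E ^^ m" for m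
  proof -
    have "(rho, y) \<in> E ^^ (a + m)" "(rho, y) \<in> E ^^ (a + k)"
      using a that assms(2) relpow_add by blast+
    from root_path_length_unique[OF this] show ?thesis by simp
  qed
  then show ?thesis unfolding ddist_def using assms(2) by (metis (mono_tags, lifting) LeastI)
qed

lemma ddist_root_eq_relpow: "(rho, y) \<in> E ^^ k \<Longrightarrow> ddist E rho y = k"
  using ddist_eq_relpow root_in_V by blast

lemma exists_deeper_sink:
  assumes "w \<in> V"
  obtains s where "is_sink V E s" "ddist E rho w \<le> ddist E rho s"
proof -
  define S where "S = {z. (w, z) \<in> E\<^sup>*}"
  have "S \<subseteq> V" using reachable_in_V assms unfolding S_def by blast
  then have "finite S" using finite_vertices finite_subset by blast
  moreover have "w \<in> S" unfolding S_def by simp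
  ultimately obtain s where s: "s \<in> S" "ddist E rho s = Max (ddist E rho ` S)"
    by (metis (mono_tags, lifting) Max_in empty_iff finite_imageI image_iff)
  have deepest: "ddist E rho z \<le> ddist E rho s" if "z \<in> S" for z
    using s(2) \<open>finite S\<close> that by simp
  have sV: "s \<in> V" using s(1) \<open>S \<subseteq> V\<close> by blast
  have "is_sink V E s"
    unfolding is_sink_def
  proof (intro conjI allI notI sV)
    fix z assume sz: "(s, z) \<in> E"
    obtain a where a: "(rho, s) \<in> E ^^ a"
      using reachable_from_root[OF sV] rtrancl_power by blast
    then have "(rho, z) \<in> E ^^ Suc a" using sz by auto
    then have "ddist E rho z = Suc (ddist E rho s)" using a ddist_root_eq_relpow by simp
    moreover have "z \<in> S" using s(1) sz unfolding S_def by auto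
    ultimately show False using deepest by fastforce
  qed
  moreover have "ddist E rho w \<le> ddist E rho s" using deepest \<open>w \<in> S\<close> .
  ultimately show ?thesis using that by blast
qed

lemma ancestor_on_path:
  assumes "(u, y) \<in> E ^^ j" "(v, y) \<in> E ^^ k" "j \<le> k"
  shows "(v, u) \<in> E ^^ (k - j)"
proof -
  obtain w where "(v, w) \<in> E ^^ (k - j)" "(w, y) \<in> E ^^ j"
    using assms(2,3) by (rule relpow_split)
  then show ?thesis using ancestor_at_distance_unique assms(1) by blast
qed

lemma out_nbhd_depth_bounded:
  assumes depth_bound: "\<forall>w\<in>V. ddist E rho w \<le> D" and u: "(rho, u) \<in> E ^^ a"
  shows "out_nbhd E k u \<subseteq> out_nbhd E (D - a) u"
proof
  fix x assume "x \<in> out_nbhd E k u"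
  then obtain i where i: "(u, x) \<in> E ^^ i" unfolding out_nbhd_def by blast
  then have "(rho, x) \<in> E ^^ (a + i)" using u relpow_add by blast
  moreover have "x \<in> V"
    using calculation root_in_V reachable_in_V relpow_imp_rtrancl by blast
  ultimately have "i \<le> D - a" using depth_bound ddist_root_eq_relpow by fastforce
  then show "x \<in> out_nbhd E (D - a) u" using i unfolding out_nbhd_def by blast
qed

end

theorem mainTheorem9:
  fixes V :: "'a set" and E :: "('a \<times> 'a) set" and rho s :: 'a and R :: "nat set"
  assumes tree: "directed_tree V E rho"
    and finR: "finite R" and posR: "\<forall>r\<in>R. 0 < r"
    and burnable: "\<exists>phi. burns V E R phi"
    and sink: "is_sink V E s"
    and maxsink: "\<forall>s'. is_sink V E s' \<longrightarrow> ddist E rho s' \<le> ddist E rho s"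
  shows "ddist E rho s \<le> Max R - 1 \<or>
         (\<exists>phi. burns V E R phi \<and>
            (\<exists>r\<in>R. (rho, phi r) \<in> E\<^sup>* \<and> (phi r, s) \<in> E\<^sup>* \<and> ddist E (phi r) s = r - 1))"
proof (cases "ddist E rho s \<le> Max R - 1")
  case False
  interpret arborescence V E rho using tree by (rule arborescence.intro)
  define D where "D = ddist E rho s"
  have deep: "Max R - 1 < D" using False unfolding D_def by simp
  have depth_bound: "\<forall>w\<in>V. ddist E rho w \<le> D"
  proof
    fix w assume "w \<in> V"
    then obtain s' where "is_sink V E s'" "ddist E rho w \<le> ddist E rho s'"
      by (rule exists_deeper_sink)
    then show "ddist E rho w \<le> D" using maxsink unfolding D_def by (blast intro: le_trans)
  qed
  obtain phi where phi: "burns V E R phi" using burnable by blast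
  have "s \<in> V" using sink unfolding is_sink_def by simp
  then have "s \<in> (\<Union>r\<in>R. out_nbhd E (r - 1) (phi r))" using phi unfolding burns_def by blast
  then obtain r j where r: "r \<in> R" and j: "j \<le> r - 1" "(phi r, s) \<in> E ^^ j"
    unfolding out_nbhd_def by blast
  have "phi r \<in> V" using phi r unfolding burns_def by blast
  then obtain a where a: "(rho, phi r) \<in> E ^^ a"
    using reachable_from_root rtrancl_power by blast
  have "(rho, s) \<in> E ^^ (a + j)" using a j(2) relpow_add by blast
  then have rho_s: "(rho, s) \<in> E ^^ D" and D: "D = a + j"
    using ddist_root_eq_relpow unfolding D_def by auto
  have "r - 1 \<le> D" using deep Max_ge[OF finR r] by simp
  with rho_s obtain v where v: "(rho, v) \<in> E ^^ (D - (r - 1))" "(v, s) \<in> E ^^ (r - 1)"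
    by (rule relpow_split)
  have vV: "v \<in> V" using v(1) root_in_V reachable_in_V relpow_imp_rtrancl by blast
  have "out_nbhd E (r - 1) (phi r) \<subseteq> out_nbhd E j (phi r)"
    using out_nbhd_depth_bounded[OF depth_bound a] D by simp
  also have "\<dots> \<subseteq> out_nbhd E (r - 1 - j + j) v"
    by (rule out_nbhd_of_descendant[OF ancestor_on_path[OF j(2) v(2) j(1)]])
  also have "r - 1 - j + j = r - 1" using j(1) by simp
  finally have "burns V E R (phi(r := v))"
    by (rule burns_fun_upd[OF phi r vV _ out_nbhd_subset_V[OF vV]])
  moreover have "(rho, v) \<in> E\<^sup>*" "(v, s) \<in> E\<^sup>*" using v relpow_imp_rtrancl by blast+
  moreover have "ddist E v s = r - 1" using ddist_eq_relpow[OF vV v(2)] .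
  ultimately show ?thesis using r by (intro disjI2 exI[of _ "phi(r := v)"]) auto
qed simp

end
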